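(* Let $n\ge2$, $\delta\in(0,n]$, $s\in[1,n/(n-1))$, $p\in[\delta/n,\ \delta/(n+s(1-n)))$ and $\kappa\in[0,\ n+s(1-n))$. Then there exists a constant $c$ depending only on $n,\delta,\kappa,s,p$ such that \[ \int_{\mathbb{R}^n}\frac{|f(y)|}{|x-y|^{s(n-1)}}\,dy\le c\,\big(M_\kappa f(x)\big)^{1-\frac{p(n-\kappa+s(1-n))}{\delta-\kappa p}}\Big(\int_{\mathbb{R}^n}|f(y)|^p\,d\mathcal{H}^{\delta}_\infty\Big)^{\frac{n-\kappa+s(1-n)}{\delta-\kappa p}} \] for all $x\in\mathbb{R}^n$ and all $f\in L^1_{loc}(\mathbb{R}^n)$.
   Context: For $\kappa\in[0,n)$ and $f\in L^1_{loc}(\mathbb{R}^n)$, $M_\kappa f(x)=\sup_{r>0} r^{\kappa-n}\int_{B(x,r)}|f(y)|\,dy$. For $E\subset\mathbb{R}^n$ and $\beta\in(0,n]$, $\mathcal{H}^{\beta}_\infty(E)=\inf\{\sum_i r_i^{\beta}: E\subset\bigcup_i B(x_i,r_i)\}$ over countable or finite coverings by open balls. For $g:\mathbb{R}^n\to[0,\infty]$, $\int_{\mathbb{R}^n} g\,d\mathcal{H}^{\beta}_\infty:=\int_0^\infty \mathcal{H}^{\beta}_\infty(\{x: g(x)>t\})\,dt$. *)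

theory Defs
  imports "HOL-Analysis.Analysis"
begin

definition ennpowr :: "ennreal \<Rightarrow> real \<Rightarrow> ennreal" where
  "ennpowr x a = (if x = \<infinity> then \<infinity> else ennreal (enn2real x powr a))"

definition locally_integrable :: "('a::euclidean_space \<Rightarrow> real) \<Rightarrow> bool" where
  "locally_integrable f \<longleftrightarrow> f \<in> borel_measurable lebesgue \<and>
     (\<forall>K. compact K \<longrightarrow> set_integrable lebesgue K f)"

definition frac_maximal :: "real \<Rightarrow> ('a::euclidean_space \<Rightarrow> real) \<Rightarrow> 'a \<Rightarrow> ennreal" where
  "frac_maximal \<kappa> f x = (SUP r\<in>{0<..}. ennreal (r powr (\<kappa> - real DIM('a))) *
      (\<integral>\<^sup>+ y\<in>ball x r. ennreal \<bar>f y\<bar> \<partial>lebesgue))"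

text \<open>Hausdorff content H^beta_infty: infimum of sum r_i^beta over countable coverings
  by open balls (finite coverings are included by allowing radius 0, i.e. empty balls).\<close>
definition hausdorff_content :: "real \<Rightarrow> 'a::euclidean_space set \<Rightarrow> ennreal" where
  "hausdorff_content \<beta> E = (INF cr\<in>{cr :: (nat \<Rightarrow> 'a) \<times> (nat \<Rightarrow> real).
        (\<forall>i. snd cr i \<ge> 0) \<and> E \<subseteq> (\<Union>i. ball (fst cr i) (snd cr i))}.
      (\<Sum>i. ennreal (snd cr i powr \<beta>)))"

definition choquet_integral :: "real \<Rightarrow> ('a::euclidean_space \<Rightarrow> real) \<Rightarrow> ennreal" where
  "choquet_integral \<beta> g = (\<integral>\<^sup>+ t\<in>{0<..}. hausdorff_content \<beta> {x. g x > t} \<partial>lborel)"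

end

theory Submission
  imports Defs
begin

text \<open>
  Since \<open>|x - y| powr (-a)\<close> is the integral of \<open>a \<rho> powr (-a - 1)\<close> over \<open>\<rho> > |x - y|\<close>, the
  potential equals the integral of \<open>a \<rho> powr (-a - 1) F \<rho>\<close> over \<open>\<rho> > 0\<close>, where \<open>F \<rho>\<close> is the
  integral of \<open>|f|\<close> over \<open>B(x, \<rho>)\<close>. There are two bounds on \<open>F \<rho>\<close>: it is at most
  \<open>\<rho> powr (n - \<kappa>)\<close> times the fractional maximal function, by definition of the latter, and at
  most \<open>C \<rho> powr (n - \<delta> / p)\<close> times the \<open>p\<close>-th root of the Choquet integral of \<open>|f| powr p\<close>.
  The second bound comes from the layer-cake formula, which writes \<open>F \<rho>\<close> through the measures
  of \<open>{|f| powr p > u} \<inter> B(x, \<rho>)\<close>, and from the estimate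
  \<open>|E \<inter> B(x, \<rho>)| \<le> C \<rho> powr (n - \<delta> q) H(E) powr q\<close> for \<open>1 \<le> q \<le> n / \<delta>\<close>, obtained by
  covering \<open>E\<close> with balls and using the superadditivity of \<open>t powr q\<close>.
  Using the first bound for small \<open>\<rho>\<close> and the second for large \<open>\<rho>\<close>, with the split at the radius
  where they agree, gives the product of powers.
\<close>

lemma ennpowr_1 [simp]: "ennpowr x 1 = x"
  by (cases x) (simp_all add: ennpowr_def)

lemma ennpowr_top [simp]: "ennpowr top e = top"
  by (simp add: ennpowr_def)

lemma ennpowr_pos: "0 < x \<Longrightarrow> 0 < ennpowr x e"
  by (cases x) (auto simp: ennpowr_def)

lemma ennpowr_ennpowr: "ennpowr (ennpowr x a) b = ennpowr x (a * b)"
  by (cases x) (simp_all add: ennpowr_def powr_powr)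

lemma ennpowr_mult_ennreal:
  assumes "0 < c"
  shows "ennpowr (ennreal c * x) e = ennreal (c powr e) * ennpowr x e"
  using assms by (cases x) (simp_all add: ennpowr_def powr_mult ennreal_mult[symmetric] ennreal_mult_top)

section \<open>Layer-cake representations\<close>

lemma sigma_finite_lebesgue: "sigma_finite_measure (lebesgue :: 'a::euclidean_space measure)"
proof -
  obtain A :: "'a set set" where A: "countable A" "A \<subseteq> sets lborel" "\<Union>A = space lborel"
      "\<forall>a\<in>A. emeasure lborel a \<noteq> \<infinity>"
    using sigma_finite_measure.sigma_finite_countable[OF sigma_finite_lborel] by blast
  show ?thesis
    by (rule sigma_finite_measure.intro, rule exI[of _ A]) (use A in \<open>auto simp: emeasure_completion\<close>)
qed

lemma (in pair_sigma_finite) nn_integral_indicator_swap: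
  fixes g :: "'a \<Rightarrow> ennreal" and k :: "'b \<Rightarrow> ennreal"
  assumes g: "g \<in> borel_measurable M1" and k: "k \<in> borel_measurable M2"
    and S: "S \<in> sets (M1 \<Otimes>\<^sub>M M2)"
  shows "(\<integral>\<^sup>+x. g x * (\<integral>\<^sup>+y. k y * indicator S (x, y) \<partial>M2) \<partial>M1)
       = (\<integral>\<^sup>+y. k y * (\<integral>\<^sup>+x. g x * indicator S (x, y) \<partial>M1) \<partial>M2)"
proof -
  have iS: "(\<lambda>z. indicator S z :: ennreal) \<in> borel_measurable (M1 \<Otimes>\<^sub>M M2)"
    using S by measurable
  have "(\<integral>\<^sup>+x. g x * (\<integral>\<^sup>+y. k y * indicator S (x, y) \<partial>M2) \<partial>M1)
      = (\<integral>\<^sup>+x. (\<integral>\<^sup>+y. g x * k y * indicator S (x, y) \<partial>M2) \<partial>M1)"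
    using measurable_Pair2[OF iS] k
    by (intro nn_integral_cong) (simp add: nn_integral_cmult mult.assoc space_pair_measure)
  also have "\<dots> = (\<integral>\<^sup>+y. (\<integral>\<^sup>+x. g x * k y * indicator S (x, y) \<partial>M1) \<partial>M2)"
  proof (rule Fubini'[symmetric])
    show "(\<lambda>(x, y). g x * k y * indicator S (x, y)) \<in> borel_measurable (M1 \<Otimes>\<^sub>M M2)"
      using g k S by measurable
  qed
  also have "\<dots> = (\<integral>\<^sup>+y. k y * (\<integral>\<^sup>+x. g x * indicator S (x, y) \<partial>M1) \<partial>M2)"
    using measurable_Pair1[OF iS] g
    by (intro nn_integral_cong) (simp add: nn_integral_cmult[symmetric] mult_ac space_pair_measure)
  finally show ?thesis .
qed

lemma nn_integral_powr_Icc_0: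
  fixes e c :: real
  assumes "0 < e" "0 \<le> c"
  shows "(\<integral>\<^sup>+u. ennreal (u powr (e - 1)) * indicator {0..c} u \<partial>lborel) = ennreal (c powr e / e)"
proof -
  have "((\<lambda>u. u powr (e - 1)) has_integral (c powr (e - 1 + 1) / (e - 1 + 1))) {0..c}"
    using assms by (intro has_integral_powr_from_0) auto
  then show ?thesis
    by (subst nn_integral_has_integral_lebesgue'[of "{0..c}"]) auto
qed

lemma nn_integral_powr_Ioo_0:
  fixes e c :: real
  assumes "0 < e" "0 \<le> c"
  shows "(\<integral>\<^sup>+u. ennreal (u powr (e - 1)) * indicator {0<..<c} u \<partial>lborel) = ennreal (c powr e / e)"
proof -
  have "AE u in lborel. indicator {0<..<c} u = (indicator {0..c} u :: ennreal)"
    using AE_lborel_singleton[of 0] AE_lborel_singleton[of c]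
    by eventually_elim (auto simp: indicator_def)
  then show ?thesis
    using nn_integral_powr_Icc_0[OF assms] by (subst nn_integral_cong_AE) auto
qed

lemma nn_integral_powr_Ici:
  fixes e r :: real
  assumes "0 < e" "0 < r"
  shows "(\<integral>\<^sup>+u. ennreal (u powr (- e - 1)) * indicator {r..} u \<partial>lborel) = ennreal (r powr (- e) / e)"
proof -
  have "((\<lambda>u. u powr (- e - 1)) has_integral - (r powr (- e - 1 + 1)) / (- e - 1 + 1)) {r..}"
    using assms by (intro has_integral_powr_to_inf) auto
  then show ?thesis
    using assms by (subst nn_integral_has_integral_lebesgue'[of "{r..}"]) auto
qed

lemma nn_integral_powr_Ioi:
  fixes e r :: real
  assumes "0 < e" "0 < r"
  shows "(\<integral>\<^sup>+u. ennreal (u powr (- e - 1)) * indicator {r<..} u \<partial>lborel) = ennreal (r powr (- e) / e)"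
proof -
  have "AE u in lborel. indicator {r<..} u = (indicator {r..} u :: ennreal)"
    using AE_lborel_singleton[of r] by eventually_elim (auto simp: indicator_def)
  then show ?thesis
    using nn_integral_powr_Ici[OF assms] by (subst nn_integral_cong_AE) auto
qed

lemma (in sigma_finite_measure) nn_integral_layer_cake_powr:
  fixes f :: "'a \<Rightarrow> real"
  assumes f: "f \<in> borel_measurable M" and A: "A \<in> sets M" and p: "0 < p"
  shows "(\<integral>\<^sup>+y\<in>A. ennreal \<bar>f y\<bar> \<partial>M)
    = (\<integral>\<^sup>+u\<in>{0<..}. ennreal (u powr (1 / p - 1) / p)
         * emeasure M ({y \<in> space M. u < \<bar>f y\<bar> powr p} \<inter> A) \<partial>lborel)"
proof -
  interpret pair_sigma_finite M "lborel :: real measure"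
    by (intro pair_sigma_finite.intro sigma_finite_measure_axioms sigma_finite_lborel)
  define S where "S = {(y, u). y \<in> space M \<and> 0 < u \<and> u < \<bar>f y\<bar> powr p}"
  have S: "S \<in> sets (M \<Otimes>\<^sub>M lborel)"
  proof -
    have "S = {z \<in> space (M \<Otimes>\<^sub>M lborel). 0 < snd z \<and> snd z < \<bar>f (fst z)\<bar> powr p}"
      by (auto simp: space_pair_measure S_def)
    also have "\<dots> \<in> sets (M \<Otimes>\<^sub>M lborel)"
      using f by measurable
    finally show ?thesis .
  qed
  define k where "k u = ennreal (u powr (1 / p - 1) / p)" for u :: real
  have inner: "ennreal \<bar>f y\<bar> = (\<integral>\<^sup>+u. k u * indicator S (y, u) \<partial>lborel)" if "y \<in> space M" for y
  proof -
    have "(\<integral>\<^sup>+u. k u * indicator S (y, u) \<partial>lborel)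
        = ennreal (1 / p) * (\<integral>\<^sup>+u. ennreal (u powr (1 / p - 1)) * indicator {0<..<\<bar>f y\<bar> powr p} u \<partial>lborel)"
      using p that
      by (subst nn_integral_cmult[symmetric]) (auto intro!: nn_integral_cong
          simp: k_def S_def indicator_def ennreal_mult[symmetric] divide_inverse mult.commute)
    also have "\<dots> = ennreal ((\<bar>f y\<bar> powr p) powr (1 / p))"
      using p by (simp add: nn_integral_powr_Ioo_0 ennreal_mult[symmetric])
    also have "(\<bar>f y\<bar> powr p) powr (1 / p) = \<bar>f y\<bar>"
      using p by (simp add: powr_powr)
    finally show ?thesis ..
  qed
  have "(\<integral>\<^sup>+y\<in>A. ennreal \<bar>f y\<bar> \<partial>M)
      = (\<integral>\<^sup>+y. indicator A y * (\<integral>\<^sup>+u. k u * indicator S (y, u) \<partial>lborel) \<partial>M)"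
    by (intro nn_integral_cong) (simp add: inner mult.commute)
  also have "\<dots> = (\<integral>\<^sup>+u. k u * (\<integral>\<^sup>+y. indicator A y * indicator S (y, u) \<partial>M) \<partial>lborel)"
    using A S by (intro nn_integral_indicator_swap) (auto simp: k_def)
  also have "\<dots> = (\<integral>\<^sup>+u\<in>{0<..}. k u * emeasure M ({y \<in> space M. u < \<bar>f y\<bar> powr p} \<inter> A) \<partial>lborel)"
  proof (intro nn_integral_cong)
    fix u :: real
    have "(\<integral>\<^sup>+y. indicator A y * indicator S (y, u) \<partial>M)
        = (\<integral>\<^sup>+y. indicator ({y \<in> space M. u < \<bar>f y\<bar> powr p} \<inter> A) y * indicator {0<..} u \<partial>M)"
      by (intro nn_integral_cong) (auto simp: indicator_def S_def)
    also have "\<dots> = emeasure M ({y \<in> space M. u < \<bar>f y\<bar> powr p} \<inter> A) * indicator {0<..} u"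
      using f A by (simp add: nn_integral_multc)
    finally show "k u * (\<integral>\<^sup>+y. indicator A y * indicator S (y, u) \<partial>M)
        = k u * emeasure M ({y \<in> space M. u < \<bar>f y\<bar> powr p} \<inter> A) * indicator {0<..} u"
      by (simp add: mult.assoc)
  qed
  finally show ?thesis
    by (simp add: k_def)
qed

lemma nn_integral_riesz_kernel_layer_cake:
  fixes f :: "'a::euclidean_space \<Rightarrow> real" and x :: 'a
  assumes f: "f \<in> borel_measurable lebesgue" and a: "0 < a"
  shows "(\<integral>\<^sup>+y. ennreal (\<bar>f y\<bar> / norm (x - y) powr a) \<partial>lebesgue)
    = (\<integral>\<^sup>+\<rho>. ennreal (a * \<rho> powr (- a - 1))
         * (\<integral>\<^sup>+y\<in>ball x \<rho>. ennreal \<bar>f y\<bar> \<partial>lebesgue) \<partial>lborel)"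
proof -
  interpret pair_sigma_finite "lebesgue :: 'a measure" "lborel :: real measure"
    by (intro pair_sigma_finite.intro sigma_finite_lebesgue sigma_finite_lborel)
  define S where "S = {(y, \<rho>). dist x y < (\<rho>::real)}"
  have S: "S \<in> sets (lebesgue \<Otimes>\<^sub>M lborel)"
  proof -
    have d: "(\<lambda>y. dist x y) \<in> borel_measurable lebesgue"
      by (intro measurable_completion) simp
    have "S = {z \<in> space (lebesgue \<Otimes>\<^sub>M lborel). dist x (fst z) < snd z}"
      by (auto simp: space_pair_measure S_def)
    also have "\<dots> \<in> sets (lebesgue \<Otimes>\<^sub>M lborel)"
      using d by measurable
    finally show ?thesis .
  qed
  define k where "k \<rho> = ennreal (a * \<rho> powr (- a - 1))" for \<rho> :: real
  have inner: "ennreal (\<bar>f y\<bar> / norm (x - y) powr a)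
      = ennreal \<bar>f y\<bar> * (\<integral>\<^sup>+\<rho>. k \<rho> * indicator S (y, \<rho>) \<partial>lborel)" if "y \<noteq> x" for y
  proof -
    have r: "0 < dist x y"
      using that by simp
    have "(\<integral>\<^sup>+\<rho>. k \<rho> * indicator S (y, \<rho>) \<partial>lborel)
        = ennreal a * (\<integral>\<^sup>+\<rho>. ennreal (\<rho> powr (- a - 1)) * indicator {dist x y<..} \<rho> \<partial>lborel)"
      using a by (subst nn_integral_cmult[symmetric])
        (auto intro!: nn_integral_cong simp: k_def S_def indicator_def ennreal_mult)
    also have "\<dots> = ennreal (dist x y powr (- a))"
      using a r by (simp add: nn_integral_powr_Ioi ennreal_mult[symmetric])
    finally show ?thesis
      by (simp add: dist_norm powr_minus_divide ennreal_mult[symmetric])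
  qed
  have "AE y in lebesgue. y \<noteq> x"
    by (intro AE_completion AE_lborel_singleton)
  then have "(\<integral>\<^sup>+y. ennreal (\<bar>f y\<bar> / norm (x - y) powr a) \<partial>lebesgue)
      = (\<integral>\<^sup>+y. ennreal \<bar>f y\<bar> * (\<integral>\<^sup>+\<rho>. k \<rho> * indicator S (y, \<rho>) \<partial>lborel) \<partial>lebesgue)"
    by (intro nn_integral_cong_AE) (auto simp: inner)
  also have "\<dots> = (\<integral>\<^sup>+\<rho>. k \<rho> * (\<integral>\<^sup>+y. ennreal \<bar>f y\<bar> * indicator S (y, \<rho>) \<partial>lebesgue) \<partial>lborel)"
    using f S by (intro nn_integral_indicator_swap) (auto simp: k_def)
  also have "\<dots> = (\<integral>\<^sup>+\<rho>. ennreal (a * \<rho> powr (- a - 1))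
      * (\<integral>\<^sup>+y\<in>ball x \<rho>. ennreal \<bar>f y\<bar> \<partial>lebesgue) \<partial>lborel)"
    by (intro nn_integral_cong) (simp add: k_def S_def indicator_def mem_ball)
  finally show ?thesis .
qed

section \<open>Hausdorff content and Lebesgue measure\<close>

lemma emeasure_lebesgue_ball:
  fixes c :: "'a::euclidean_space"
  assumes "0 \<le> r"
  shows "emeasure lebesgue (ball c r) = ennreal (unit_ball_vol (real DIM('a)) * r powr real DIM('a))"
  using assms emeasure_ball[of r c] by (cases "r = 0") (auto simp: powr_realpow)

lemma emeasure_ball_Int_ball_le:
  fixes c x :: "'a::euclidean_space"
  assumes "0 \<le> r" "0 < \<rho>" "0 \<le> \<gamma>" "\<gamma> \<le> real DIM('a)"
  shows "emeasure lebesgue (ball c r \<inter> ball x \<rho>)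
     \<le> ennreal (unit_ball_vol (real DIM('a)) * (\<rho> powr (real DIM('a) - \<gamma>) * r powr \<gamma>))"
proof -
  define n where "n = real DIM('a)"
  have "emeasure lebesgue (ball c r \<inter> ball x \<rho>) \<le> ennreal (unit_ball_vol n * min r \<rho> powr n)"
  proof (cases "r \<le> \<rho>")
    case True
    have "emeasure lebesgue (ball c r \<inter> ball x \<rho>) \<le> emeasure lebesgue (ball c r)"
      by (intro emeasure_mono) auto
    also have "\<dots> = ennreal (unit_ball_vol n * r powr n)"
      unfolding n_def using assms(1) by (rule emeasure_lebesgue_ball)
    finally show ?thesis
      using True by simp
  next
    case False
    have "emeasure lebesgue (ball c r \<inter> ball x \<rho>) \<le> emeasure lebesgue (ball x \<rho>)"
      by (intro emeasure_mono) auto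
    also have "\<dots> = ennreal (unit_ball_vol n * \<rho> powr n)"
      unfolding n_def using assms(2) by (intro emeasure_lebesgue_ball) simp
    finally show ?thesis
      using False by simp
  qed
  also have "min r \<rho> powr n = min r \<rho> powr (n - \<gamma>) * min r \<rho> powr \<gamma>"
    by (simp add: powr_add[symmetric])
  also have "\<dots> \<le> \<rho> powr (n - \<gamma>) * r powr \<gamma>"
    using assms by (intro mult_mono powr_mono2) (auto simp: n_def)
  finally show ?thesis
    by (simp add: n_def ennreal_leI)
qed

lemma suminf_powr_le_powr_suminf:
  fixes b :: "nat \<Rightarrow> real"
  assumes b: "\<And>i. 0 \<le> b i" and sb: "summable b" and q: "1 \<le> q"
  shows "(\<Sum>i. ennreal (b i powr q)) \<le> ennreal ((\<Sum>i. b i) powr q)"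
proof -
  define S where "S = (\<Sum>i. b i)"
  have S0: "0 \<le> S"
    unfolding S_def using b sb by (simp add: suminf_nonneg)
  have "b i powr q \<le> S powr (q - 1) * b i" for i
  proof (cases "b i = 0")
    case False
    then have bi: "0 < b i"
      using b[of i] by simp
    have "b i \<le> S"
      using sum_le_suminf[OF sb, of "{i}"] b by (auto simp: S_def)
    then have "b i powr (q - 1) * b i \<le> S powr (q - 1) * b i"
      using bi q by (intro mult_right_mono powr_mono2) auto
    with bi show ?thesis
      by (simp add: powr_mult_base mult.commute)
  qed simp
  then have "(\<Sum>i. ennreal (b i powr q)) \<le> (\<Sum>i. ennreal (S powr (q - 1)) * ennreal (b i))"
    using b by (intro suminf_le) (auto simp: ennreal_mult[symmetric] intro!: ennreal_leI)
  also have "\<dots> = ennreal (S powr (q - 1)) * ennreal S"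
    using suminf_ennreal2[OF b sb] by (simp add: S_def)
  also have "\<dots> = ennreal (S powr q)"
    using S0 by (cases "S = 0") (simp_all add: ennreal_mult[symmetric] powr_mult_base mult.commute)
  finally show ?thesis
    by (simp add: S_def)
qed

lemma emeasure_Int_ball_le_cover:
  fixes E :: "'a::euclidean_space set" and c :: "nat \<Rightarrow> 'a"
  assumes cover: "E \<subseteq> (\<Union>i. ball (c i) (r i))" and r: "\<And>i. 0 \<le> r i"
    and sr: "summable (\<lambda>i. r i powr \<delta>)"
    and \<rho>: "0 < \<rho>" and \<delta>: "0 < \<delta>" and q: "1 \<le> q" "\<delta> * q \<le> real DIM('a)"
  shows "emeasure lebesgue (E \<inter> ball x \<rho>)
     \<le> ennreal (unit_ball_vol (real DIM('a)) * \<rho> powr (real DIM('a) - \<delta> * q) * (\<Sum>i. r i powr \<delta>) powr q)"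
proof -
  define K where "K = unit_ball_vol (real DIM('a)) * \<rho> powr (real DIM('a) - \<delta> * q)"
  have K: "0 \<le> K"
    by (simp add: K_def)
  have "emeasure lebesgue (E \<inter> ball x \<rho>) \<le> emeasure lebesgue (\<Union>i. ball (c i) (r i) \<inter> ball x \<rho>)"
    using cover by (intro emeasure_mono) auto
  also have "\<dots> \<le> (\<Sum>i. emeasure lebesgue (ball (c i) (r i) \<inter> ball x \<rho>))"
    by (intro emeasure_subadditive_countably) auto
  also have "\<dots> \<le> (\<Sum>i. ennreal K * ennreal ((r i powr \<delta>) powr q))"
  proof (intro suminf_le)
    fix i
    have "emeasure lebesgue (ball (c i) (r i) \<inter> ball x \<rho>) \<le> ennreal (K * r i powr (\<delta> * q))"
      using emeasure_ball_Int_ball_le[of "r i" \<rho> "\<delta> * q" "c i" x] r \<rho> \<delta> q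
      by (simp add: K_def mult.assoc)
    then show "emeasure lebesgue (ball (c i) (r i) \<inter> ball x \<rho>) \<le> ennreal K * ennreal ((r i powr \<delta>) powr q)"
      using K by (simp add: powr_powr ennreal_mult)
  qed auto
  also have "\<dots> = ennreal K * (\<Sum>i. ennreal ((r i powr \<delta>) powr q))"
    by simp
  also have "\<dots> \<le> ennreal K * ennreal ((\<Sum>i. r i powr \<delta>) powr q)"
    using sr q by (intro mult_left_mono suminf_powr_le_powr_suminf) auto
  finally show ?thesis
    using K by (simp add: K_def ennreal_mult)
qed

lemma powr_inverse_le_iff:
  fixes x y q :: real
  assumes "0 \<le> x" "0 \<le> y" "0 < q"
  shows "x powr (1 / q) \<le> y \<longleftrightarrow> x \<le> y powr q"
proof
  assume "x powr (1 / q) \<le> y"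
  then have "(x powr (1 / q)) powr q \<le> y powr q"
    using assms by (intro powr_mono2) auto
  with assms show "x \<le> y powr q"
    by (simp add: powr_powr)
next
  assume "x \<le> y powr q"
  then have "x powr (1 / q) \<le> (y powr q) powr (1 / q)"
    using assms by (intro powr_mono2) auto
  with assms show "x powr (1 / q) \<le> y"
    by (simp add: powr_powr)
qed

lemma ennreal_le_hausdorff_content:
  assumes "\<And>c r. (\<And>i. 0 \<le> r i) \<Longrightarrow> E \<subseteq> (\<Union>i. ball (c i) (r i)) \<Longrightarrow> summable (\<lambda>i. r i powr \<beta>)
      \<Longrightarrow> t \<le> (\<Sum>i. r i powr \<beta>)"
  shows "ennreal t \<le> hausdorff_content \<beta> E"
  unfolding hausdorff_content_def
proof (rule INF_greatest, clarsimp)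
  fix c :: "nat \<Rightarrow> 'a" and r :: "nat \<Rightarrow> real"
  assume r: "\<forall>i. 0 \<le> r i" and cover: "E \<subseteq> (\<Union>i. ball (c i) (r i))"
  show "ennreal t \<le> (\<Sum>i. ennreal (r i powr \<beta>))"
  proof (cases "summable (\<lambda>i. r i powr \<beta>)")
    case True
    then have "(\<Sum>i. ennreal (r i powr \<beta>)) = ennreal (\<Sum>i. r i powr \<beta>)"
      by (simp add: suminf_ennreal2)
    with assms[OF _ cover True] r show ?thesis
      by (simp add: ennreal_leI)
  next
    case False
    then have "(\<Sum>i. ennreal (r i powr \<beta>)) = top"
      using summable_suminf_not_top[of "\<lambda>i. r i powr \<beta>", OF powr_ge_zero] by blast
    then show ?thesis
      by simp
  qed
qed

lemma emeasure_Int_ball_le_hausdorff_content: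
  fixes E :: "'a::euclidean_space set"
  assumes \<rho>: "0 < \<rho>" and \<delta>: "0 < \<delta>" and q: "1 \<le> q" "\<delta> * q \<le> real DIM('a)"
  shows "emeasure lebesgue (E \<inter> ball x \<rho>)
     \<le> ennreal (unit_ball_vol (real DIM('a)) * \<rho> powr (real DIM('a) - \<delta> * q))
        * ennpowr (hausdorff_content \<delta> E) q"
proof -
  define K where "K = unit_ball_vol (real DIM('a)) * \<rho> powr (real DIM('a) - \<delta> * q)"
  define m where "m = measure lebesgue (E \<inter> ball x \<rho>)"
  have K: "0 < K"
    using \<rho> by (simp add: K_def)
  have "emeasure lebesgue (E \<inter> ball x \<rho>) \<le> emeasure lebesgue (ball x \<rho>)"
    by (intro emeasure_mono) auto
  also have "\<dots> < \<infinity>"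
    using \<rho> by (subst emeasure_lebesgue_ball) auto
  finally have m: "emeasure lebesgue (E \<inter> ball x \<rho>) = ennreal m"
    by (simp add: m_def emeasure_eq_ennreal_measure)
  have m_le_iff: "(m / K) powr (1 / q) \<le> t \<longleftrightarrow> m \<le> K * t powr q" if "0 \<le> t" for t
    using K q that by (simp add: powr_inverse_le_iff m_def pos_divide_le_eq mult.commute)
  have H: "ennreal ((m / K) powr (1 / q)) \<le> hausdorff_content \<delta> E"
  proof (rule ennreal_le_hausdorff_content)
    fix c :: "nat \<Rightarrow> 'a" and r :: "nat \<Rightarrow> real"
    assume r: "\<And>i. 0 \<le> r i" and cover: "E \<subseteq> (\<Union>i. ball (c i) (r i))" and sr: "summable (\<lambda>i. r i powr \<delta>)"
    have "m \<le> K * (\<Sum>i. r i powr \<delta>) powr q"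
      using emeasure_Int_ball_le_cover[OF cover r sr \<rho> \<delta> q, of x] m by (simp add: K_def)
    with r sr show "(m / K) powr (1 / q) \<le> (\<Sum>i. r i powr \<delta>)"
      by (simp add: m_le_iff suminf_nonneg)
  qed
  show ?thesis
  proof (cases "hausdorff_content \<delta> E")
    case (real h)
    with H m_le_iff have "m \<le> K * h powr q"
      by (simp add: ennreal_le_iff)
    with real K m show ?thesis
      by (simp add: ennpowr_def K_def[symmetric] ennreal_mult[symmetric] ennreal_leI)
  qed (use K in \<open>simp add: ennpowr_def K_def[symmetric] ennreal_mult_top\<close>)
qed

lemma hausdorff_content_mono: "A \<subseteq> B \<Longrightarrow> hausdorff_content \<beta> A \<le> hausdorff_content \<beta> B"
  unfolding hausdorff_content_def by (rule INF_superset_mono) auto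

lemma antimono_hausdorff_content_superlevel: "antimono (\<lambda>t. hausdorff_content \<beta> {y. t < g y})"
  unfolding antimono_def by (auto intro!: hausdorff_content_mono)

section \<open>Integrals over balls\<close>

lemma borel_measurable_antimono:
  fixes f :: "real \<Rightarrow> 'b::{linorder_topology, second_countable_topology}"
  assumes "antimono f"
  shows "f \<in> borel_measurable borel"
proof (rule borel_measurableI_greater)
  fix c
  have "is_interval {t. c < f t}"
    using assms unfolding is_interval_1 antimono_def by (auto intro: less_le_trans)
  then show "{t \<in> space borel. c < f t} \<in> sets borel"
    by (simp add: real_interval_borel_measurable)
qed

lemma mult_le_set_nn_integral_antimono:
  fixes h :: "real \<Rightarrow> ennreal"
  assumes "antimono h" "0 < u"
  shows "ennreal u * h u \<le> (\<integral>\<^sup>+t\<in>{0<..}. h t \<partial>lborel)"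
proof -
  have "ennreal u * h u = (\<integral>\<^sup>+t. h u * indicator {0<..u} t \<partial>lborel)"
    using assms(2) by (simp add: nn_integral_cmult_indicator mult.commute)
  also have "\<dots> \<le> (\<integral>\<^sup>+t\<in>{0<..}. h t \<partial>lborel)"
    using assms(1) by (intro nn_integral_mono) (auto simp: indicator_def antimonoD)
  finally show ?thesis .
qed

lemma ennreal_mult_le_ennrealE:
  assumes "ennreal u * h \<le> ennreal c" "0 < u" "0 \<le> c"
  obtains r where "h = ennreal r" "0 \<le> r" "u * r \<le> c"
proof (cases h)
  case (real r)
  with assms show ?thesis
    by (intro that[of r]) (auto simp: ennreal_mult[symmetric])
next
  case top
  with assms show ?thesis
    by (simp add: ennreal_mult_top top_unique)
qed

lemma powr_mult_le_of_mult_le: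
  fixes u r J e :: real
  assumes "0 < u" "0 \<le> r" "u * r \<le> J" "1 \<le> e"
  shows "u powr (e - 1) * r powr e \<le> J powr (e - 1) * r"
proof (cases "r = 0")
  case False
  then have "u powr (e - 1) * r powr e = (u * r) powr (e - 1) * r"
    using assms by (simp add: powr_mult powr_mult_base mult_ac)
  also have "\<dots> \<le> J powr (e - 1) * r"
    using assms by (intro mult_right_mono powr_mono2) auto
  finally show ?thesis .
qed simp

lemma layer_integral_le_of_power_bound:
  fixes m h :: "real \<Rightarrow> ennreal"
  assumes p: "0 < p" "p < 1" and A: "0 \<le> A"
    and h: "antimono h" "(\<integral>\<^sup>+u\<in>{0<..}. h u \<partial>lborel) = ennreal J" "0 \<le> J"
    and m: "\<And>u. 0 < u \<Longrightarrow> m u \<le> ennreal A * ennpowr (h u) (1 / p)"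
  shows "(\<integral>\<^sup>+u\<in>{0<..}. ennreal (u powr (1 / p - 1) / p) * m u \<partial>lborel) \<le> ennreal (A / p * J powr (1 / p))"
proof -
  define C where "C = A / p * J powr (1 / p - 1)"
  have C: "0 \<le> C"
    using A p by (simp add: C_def)
  have "ennreal (u powr (1 / p - 1) / p) * m u * indicator {0<..} u \<le> ennreal C * (h u * indicator {0<..} u)" for u
  proof (cases "0 < u")
    case u: True
    have "ennreal u * h u \<le> ennreal J"
      using mult_le_set_nn_integral_antimono[OF h(1) u] h(2) by simp
    then obtain r where r: "h u = ennreal r" "0 \<le> r" "u * r \<le> J"
      using u h(3) by (rule ennreal_mult_le_ennrealE)
    have "ennreal (u powr (1 / p - 1) / p) * m u
        \<le> ennreal (u powr (1 / p - 1) / p) * (ennreal A * ennreal (r powr (1 / p)))"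
      using m[OF u] r(1,2) by (intro mult_left_mono) (simp_all add: ennpowr_def)
    also have "\<dots> = ennreal (A / p * (u powr (1 / p - 1) * r powr (1 / p)))"
      using A p by (simp add: ennreal_mult[symmetric] mult_ac)
    also have "\<dots> \<le> ennreal (A / p * (J powr (1 / p - 1) * r))"
      using powr_mult_le_of_mult_le[OF u r(2,3), of "1 / p"] A p by (intro ennreal_leI mult_left_mono) auto
    also have "\<dots> = ennreal C * h u"
      using ennreal_mult[OF C r(2)] unfolding r(1) by (simp add: C_def mult_ac)
    finally show ?thesis
      using u by simp
  qed simp
  then have "(\<integral>\<^sup>+u\<in>{0<..}. ennreal (u powr (1 / p - 1) / p) * m u \<partial>lborel)
      \<le> (\<integral>\<^sup>+u. ennreal C * (h u * indicator {0<..} u) \<partial>lborel)"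
    by (intro nn_integral_mono)
  also have "\<dots> = ennreal (C * J)"
    using h borel_measurable_antimono[OF h(1)] C by (simp add: nn_integral_cmult ennreal_mult)
  also have "C * J = A / p * J powr (1 / p)"
    using h(3) by (cases "J = 0") (simp_all add: C_def powr_diff)
  finally show ?thesis .
qed

lemma layer_integral_le_of_split_bound:
  fixes m h :: "real \<Rightarrow> ennreal"
  assumes p: "1 \<le> p" and V: "0 < V" and D: "0 < D"
    and h: "antimono h" "(\<integral>\<^sup>+u\<in>{0<..}. h u \<partial>lborel) = ennreal J" "0 \<le> J"
    and mV: "\<And>u. 0 < u \<Longrightarrow> m u \<le> ennreal V"
    and mD: "\<And>u. 0 < u \<Longrightarrow> m u \<le> ennreal D * h u"
  shows "(\<integral>\<^sup>+u\<in>{0<..}. ennreal (u powr (1 / p - 1) / p) * m u \<partial>lborel)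
    \<le> ennreal ((1 + 1 / p) * (V * (D * J / V) powr (1 / p)))"
proof (cases "J = 0")
  case True
  have integrand_0: "ennreal (u powr (1 / p - 1) / p) * m u * indicator {0<..} u = 0" for u
  proof (cases "0 < u")
    case u: True
    have "ennreal u * h u \<le> 0"
      using mult_le_set_nn_integral_antimono[OF h(1) u] h(2) True by simp
    then have "m u = 0"
      using mD[OF u] u by simp
    then show ?thesis
      by simp
  qed simp
  show ?thesis
    by (simp only: integrand_0) simp
next
  case False
  define u\<^sub>0 where "u\<^sub>0 = D * J / V"
  have u\<^sub>0: "0 < u\<^sub>0"
    using False h(3) V D by (simp add: u\<^sub>0_def)
  \<comment> \<open>\<open>m u \<le> V\<close> is used below \<open>u\<^sub>0\<close> and \<open>m u \<le> D * h u \<le> D * J / u\<close> above;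
    the two bounds meet at \<open>u\<^sub>0\<close>\<close>
  have "ennreal (u powr (1 / p - 1) / p) * m u * indicator {0<..} u
      \<le> ennreal (V / p) * (ennreal (u powr (1 / p - 1)) * indicator {0..u\<^sub>0} u)
        + ennreal (D * (u\<^sub>0 powr (1 / p - 1) / p)) * (h u * indicator {0<..} u)" for u
  proof (cases "0 < u")
    case u: True
    show ?thesis
    proof (cases "u \<le> u\<^sub>0")
      case True
      have "ennreal (u powr (1 / p - 1) / p) * m u \<le> ennreal (u powr (1 / p - 1) / p) * ennreal V"
        using mV[OF u] by (rule mult_left_mono) simp
      also have "\<dots> = ennreal (V / p) * ennreal (u powr (1 / p - 1))"
        using p V by (simp add: ennreal_mult[symmetric] mult_ac)
      finally show ?thesis
        using u True by (simp add: add_increasing2)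
    next
      case False
      have "ennreal (u powr (1 / p - 1) / p) * m u \<le> ennreal (u powr (1 / p - 1) / p) * (ennreal D * h u)"
        using mD[OF u] by (rule mult_left_mono) simp
      also have "\<dots> \<le> ennreal (u\<^sub>0 powr (1 / p - 1) / p) * (ennreal D * h u)"
        using False u\<^sub>0 p by (intro mult_right_mono ennreal_leI divide_right_mono powr_mono2') auto
      also have "\<dots> = ennreal (D * (u\<^sub>0 powr (1 / p - 1) / p)) * h u"
        using p D by (subst ennreal_mult) (auto simp: mult_ac)
      finally show ?thesis
        using u by (simp add: add_increasing)
    qed
  qed simp
  then have "(\<integral>\<^sup>+u\<in>{0<..}. ennreal (u powr (1 / p - 1) / p) * m u \<partial>lborel)
      \<le> (\<integral>\<^sup>+u. ennreal (V / p) * (ennreal (u powr (1 / p - 1)) * indicator {0..u\<^sub>0} u)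
        + ennreal (D * (u\<^sub>0 powr (1 / p - 1) / p)) * (h u * indicator {0<..} u) \<partial>lborel)"
    by (intro nn_integral_mono)
  also have "\<dots> = ennreal (V / p) * ennreal (u\<^sub>0 powr (1 / p) * p) + ennreal (D * (u\<^sub>0 powr (1 / p - 1) / p)) * ennreal J"
    using borel_measurable_antimono[OF h(1)] h(2) nn_integral_powr_Icc_0[of "1 / p" u\<^sub>0] p u\<^sub>0
    by (simp add: nn_integral_add nn_integral_cmult)
  also have "\<dots> = ennreal (V * u\<^sub>0 powr (1 / p) + u\<^sub>0 powr (1 / p - 1) * (D * J) / p)"
    using p V D u\<^sub>0 h(3) by (simp add: ennreal_mult[symmetric] ennreal_plus[symmetric] mult_ac del: ennreal_plus)
  also have "u\<^sub>0 powr (1 / p - 1) * (D * J) = V * u\<^sub>0 powr (1 / p)"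
  proof -
    have "D * J = V * u\<^sub>0"
      using V by (simp add: u\<^sub>0_def)
    with u\<^sub>0 show ?thesis
      by (simp add: powr_diff)
  qed
  finally show ?thesis
    by (simp add: u\<^sub>0_def algebra_simps)
qed

lemma layer_integral_le_of_content_bounds:
  fixes m h :: "real \<Rightarrow> ennreal"
  assumes p: "0 < p" "\<delta> / p \<le> n" "\<delta> \<le> n" and \<rho>: "0 < \<rho>" and \<omega>: "0 < \<omega>"
    and h: "antimono h" "(\<integral>\<^sup>+u\<in>{0<..}. h u \<partial>lborel) = ennreal J" "0 \<le> J"
    and mV: "\<And>u. 0 < u \<Longrightarrow> m u \<le> ennreal (\<omega> * \<rho> powr n)"
    and mH: "\<And>u q. 0 < u \<Longrightarrow> 1 \<le> q \<Longrightarrow> \<delta> * q \<le> n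
      \<Longrightarrow> m u \<le> ennreal (\<omega> * \<rho> powr (n - \<delta> * q)) * ennpowr (h u) q"
  shows "(\<integral>\<^sup>+u\<in>{0<..}. ennreal (u powr (1 / p - 1) / p) * m u \<partial>lborel)
    \<le> ennreal (\<omega> * (1 + 1 / p) * \<rho> powr (n - \<delta> / p) * J powr (1 / p))"
proof (cases "p < 1")
  case True
  have "1 \<le> 1 / p"
    using True p by simp
  then have "(\<integral>\<^sup>+u\<in>{0<..}. ennreal (u powr (1 / p - 1) / p) * m u \<partial>lborel)
      \<le> ennreal (\<omega> * \<rho> powr (n - \<delta> / p) / p * J powr (1 / p))"
    using mH[of _ "1 / p"] p \<omega> True h by (intro layer_integral_le_of_power_bound) auto
  also have "\<dots> \<le> ennreal (\<omega> * (1 + 1 / p) * \<rho> powr (n - \<delta> / p) * J powr (1 / p))"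
    using \<omega> p by (intro ennreal_leI mult_right_mono) (auto simp: field_simps)
  finally show ?thesis .
next
  case False
  have "(\<integral>\<^sup>+u\<in>{0<..}. ennreal (u powr (1 / p - 1) / p) * m u \<partial>lborel)
      \<le> ennreal ((1 + 1 / p) * ((\<omega> * \<rho> powr n) * (\<omega> * \<rho> powr (n - \<delta>) * J / (\<omega> * \<rho> powr n)) powr (1 / p)))"
    using mH[of _ 1] mV p(3) \<omega> \<rho> False h by (intro layer_integral_le_of_split_bound) auto
  also have "(\<omega> * \<rho> powr n) * (\<omega> * \<rho> powr (n - \<delta>) * J / (\<omega> * \<rho> powr n)) powr (1 / p)
      = \<omega> * \<rho> powr (n - \<delta> / p) * J powr (1 / p)"
    using \<omega> \<rho> h(3) p by (simp add: powr_diff powr_mult powr_divide powr_powr divide_simps flip: powr_add)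
  finally show ?thesis
    by (simp add: mult_ac)
qed

lemma set_nn_integral_ball_le_choquet:
  fixes f :: "'a::euclidean_space \<Rightarrow> real"
  assumes f: "f \<in> borel_measurable lebesgue" and \<rho>: "0 < \<rho>"
    and \<delta>: "0 < \<delta>" "\<delta> \<le> real DIM('a)" and p: "\<delta> / real DIM('a) \<le> p"
  shows "(\<integral>\<^sup>+y\<in>ball x \<rho>. ennreal \<bar>f y\<bar> \<partial>lebesgue)
    \<le> ennreal (unit_ball_vol (real DIM('a)) * (1 + 1 / p) * \<rho> powr (real DIM('a) - \<delta> / p))
       * ennpowr (choquet_integral \<delta> (\<lambda>y. \<bar>f y\<bar> powr p)) (1 / p)"
proof -
  define n where "n = real DIM('a)"
  define \<omega> where "\<omega> = unit_ball_vol n"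
  define h where "h u = hausdorff_content \<delta> {y. u < \<bar>f y\<bar> powr p}" for u
  define m where "m u = emeasure lebesgue ({y. u < \<bar>f y\<bar> powr p} \<inter> ball x \<rho>)" for u
  have n: "0 < n" and \<omega>: "0 < \<omega>"
    by (simp_all add: n_def \<omega>_def)
  have "0 < \<delta> / n"
    using \<delta>(1) n by simp
  with p have p0: "0 < p"
    by (simp add: n_def)
  have \<delta>p: "\<delta> / p \<le> n"
    using p p0 n by (simp add: n_def field_simps)
  have layer: "(\<integral>\<^sup>+y\<in>ball x \<rho>. ennreal \<bar>f y\<bar> \<partial>lebesgue)
      = (\<integral>\<^sup>+u\<in>{0<..}. ennreal (u powr (1 / p - 1) / p) * m u \<partial>lborel)"
    using sigma_finite_measure.nn_integral_layer_cake_powr[OF sigma_finite_lebesgue f _ p0, of "ball x \<rho>"]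
    by (simp add: m_def)
  have mV: "m u \<le> ennreal (\<omega> * \<rho> powr n)" for u
  proof -
    have "m u \<le> emeasure lebesgue (ball x \<rho>)"
      unfolding m_def by (intro emeasure_mono) auto
    also have "\<dots> = ennreal (\<omega> * \<rho> powr n)"
      unfolding \<omega>_def n_def using \<rho> by (intro emeasure_lebesgue_ball) simp
    finally show ?thesis .
  qed
  have mH: "m u \<le> ennreal (\<omega> * \<rho> powr (n - \<delta> * q)) * ennpowr (h u) q" if "1 \<le> q" "\<delta> * q \<le> n" for u q
    unfolding m_def h_def \<omega>_def n_def
    using emeasure_Int_ball_le_hausdorff_content[OF \<rho> \<delta>(1) that[unfolded n_def]] .
  have h: "antimono h"
    unfolding h_def by (rule antimono_hausdorff_content_superlevel)
  show ?thesis
  proof (cases "choquet_integral \<delta> (\<lambda>y. \<bar>f y\<bar> powr p)")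
    case (real J)
    have "(\<integral>\<^sup>+u\<in>{0<..}. h u \<partial>lborel) = ennreal J"
      using real by (simp add: choquet_integral_def h_def)
    then have "(\<integral>\<^sup>+u\<in>{0<..}. ennreal (u powr (1 / p - 1) / p) * m u \<partial>lborel)
        \<le> ennreal (\<omega> * (1 + 1 / p) * \<rho> powr (n - \<delta> / p) * J powr (1 / p))"
      using mV mH h p0 \<delta>p \<rho> \<omega> \<delta> real by (intro layer_integral_le_of_content_bounds) (auto simp: n_def)
    then show ?thesis
      using real \<omega> p0 \<rho> by (simp add: layer ennpowr_def ennreal_mult n_def \<omega>_def mult_ac)
  next
    case top
    have "ennreal (\<omega> * (1 + 1 / p) * \<rho> powr (n - \<delta> / p)) * top = top"
      using \<omega> p0 \<rho> by (intro ennreal_top_mult_left) (auto simp: add_pos_pos less_imp_neq[symmetric])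
    with top show ?thesis
      unfolding n_def \<omega>_def by (metis ennpowr_top top_greatest)
  qed
qed

lemma set_nn_integral_ball_le_frac_maximal:
  fixes f :: "'a::euclidean_space \<Rightarrow> real"
  assumes "0 < \<rho>"
  shows "(\<integral>\<^sup>+y\<in>ball x \<rho>. ennreal \<bar>f y\<bar> \<partial>lebesgue)
    \<le> ennreal (\<rho> powr (real DIM('a) - \<kappa>)) * frac_maximal \<kappa> f x"
proof -
  define F where "F = (\<integral>\<^sup>+y\<in>ball x \<rho>. ennreal \<bar>f y\<bar> \<partial>lebesgue)"
  have "ennreal (\<rho> powr (\<kappa> - real DIM('a))) * F \<le> frac_maximal \<kappa> f x"
    unfolding frac_maximal_def F_def using assms by (intro SUP_upper2[of \<rho>]) auto
  then have "ennreal (\<rho> powr (real DIM('a) - \<kappa>)) * (ennreal (\<rho> powr (\<kappa> - real DIM('a))) * F)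
      \<le> ennreal (\<rho> powr (real DIM('a) - \<kappa>)) * frac_maximal \<kappa> f x"
    by (rule mult_left_mono) simp
  moreover have "ennreal (\<rho> powr (real DIM('a) - \<kappa>)) * ennreal (\<rho> powr (\<kappa> - real DIM('a))) = 1"
    using assms by (simp add: ennreal_mult[symmetric] powr_add[symmetric])
  ultimately show ?thesis
    by (simp add: F_def mult.assoc[symmetric])
qed

section \<open>Interpolation\<close>

lemma powr_balance:
  fixes M N \<alpha> \<beta> :: real
  assumes "0 < M" "0 < N" "0 < \<alpha>" "0 < \<beta>"
  defines "\<rho>\<^sub>0 \<equiv> (N / M) powr (1 / (\<alpha> + \<beta>))"
  shows "M * \<rho>\<^sub>0 powr \<alpha> = M powr (\<beta> / (\<alpha> + \<beta>)) * N powr (\<alpha> / (\<alpha> + \<beta>))"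
    and "N * \<rho>\<^sub>0 powr (- \<beta>) = M powr (\<beta> / (\<alpha> + \<beta>)) * N powr (\<alpha> / (\<alpha> + \<beta>))"
proof -
  have \<beta>: "\<beta> / (\<alpha> + \<beta>) = 1 - \<alpha> / (\<alpha> + \<beta>)"
    using assms by (simp add: field_simps)
  show M: "M * \<rho>\<^sub>0 powr \<alpha> = M powr (\<beta> / (\<alpha> + \<beta>)) * N powr (\<alpha> / (\<alpha> + \<beta>))"
    using assms(1,2) unfolding \<rho>\<^sub>0_def
    by (subst \<beta>) (simp add: powr_powr powr_divide powr_diff)
  have "\<rho>\<^sub>0 powr (\<alpha> + \<beta>) = N / M"
    using assms by (simp add: \<rho>\<^sub>0_def powr_powr)
  then have "N * \<rho>\<^sub>0 powr (- \<beta>) = M * (\<rho>\<^sub>0 powr (\<alpha> + \<beta>) * \<rho>\<^sub>0 powr (- \<beta>))"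
    using assms(1) by simp
  also have "\<dots> = M * \<rho>\<^sub>0 powr \<alpha>"
    by (simp add: powr_add[symmetric])
  finally show "N * \<rho>\<^sub>0 powr (- \<beta>) = M powr (\<beta> / (\<alpha> + \<beta>)) * N powr (\<alpha> / (\<alpha> + \<beta>))"
    using M by simp
qed

lemma kernel_mult_le_powr:
  assumes "0 < \<rho>" "0 < a" "0 \<le> C" "F \<le> ennreal (\<rho> powr (a + \<gamma>)) * ennreal C"
  shows "ennreal (a * \<rho> powr (- a - 1)) * F \<le> ennreal (a * C) * ennreal (\<rho> powr (\<gamma> - 1))"
proof -
  have "ennreal (a * \<rho> powr (- a - 1)) * F \<le> ennreal (a * \<rho> powr (- a - 1)) * (ennreal (\<rho> powr (a + \<gamma>)) * ennreal C)"
    using assms(4) by (rule mult_left_mono) simp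
  also have "\<dots> = ennreal (a * C * (\<rho> powr (- a - 1) * \<rho> powr (a + \<gamma>)))"
    using assms by (simp add: ennreal_mult[symmetric] mult_ac)
  also have "\<rho> powr (- a - 1) * \<rho> powr (a + \<gamma>) = \<rho> powr (\<gamma> - 1)"
    by (simp add: powr_add[symmetric])
  finally show ?thesis
    using assms by (simp add: ennreal_mult)
qed

lemma nn_integral_kernel_interpolation_real:
  fixes F :: "real \<Rightarrow> ennreal" and M N :: real
  assumes a: "0 < a" and \<alpha>: "0 < \<alpha>" and \<beta>: "0 < \<beta>" and M: "0 < M" and N: "0 < N"
    and F0: "\<And>\<rho>. \<rho> \<le> 0 \<Longrightarrow> F \<rho> = 0"
    and FM: "\<And>\<rho>. 0 < \<rho> \<Longrightarrow> F \<rho> \<le> ennreal (\<rho> powr (a + \<alpha>)) * ennreal M"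
    and FN: "\<And>\<rho>. 0 < \<rho> \<Longrightarrow> F \<rho> \<le> ennreal (\<rho> powr (a - \<beta>)) * ennreal N"
  shows "(\<integral>\<^sup>+\<rho>. ennreal (a * \<rho> powr (- a - 1)) * F \<rho> \<partial>lborel)
    \<le> ennreal ((a / \<alpha> + a / \<beta>) * (M powr (\<beta> / (\<alpha> + \<beta>)) * N powr (\<alpha> / (\<alpha> + \<beta>))))"
proof -
  define \<rho>\<^sub>0 where "\<rho>\<^sub>0 = (N / M) powr (1 / (\<alpha> + \<beta>))"
  have \<rho>\<^sub>0: "0 < \<rho>\<^sub>0"
    using M N by (simp add: \<rho>\<^sub>0_def)
  \<comment> \<open>the two bounds on \<open>F\<close> agree at \<open>\<rho>\<^sub>0\<close>; the first is used below it, the second above\<close>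
  have "ennreal (a * \<rho> powr (- a - 1)) * F \<rho>
      \<le> ennreal (a * M) * (ennreal (\<rho> powr (\<alpha> - 1)) * indicator {0..\<rho>\<^sub>0} \<rho>)
        + ennreal (a * N) * (ennreal (\<rho> powr (- \<beta> - 1)) * indicator {\<rho>\<^sub>0..} \<rho>)" for \<rho>
  proof (cases "0 < \<rho>")
    case \<rho>: True
    have "ennreal (a * \<rho> powr (- a - 1)) * F \<rho> \<le> ennreal (a * M) * ennreal (\<rho> powr (\<alpha> - 1))"
      using FM[OF \<rho>] \<rho> a M by (intro kernel_mult_le_powr) auto
    moreover have "ennreal (a * \<rho> powr (- a - 1)) * F \<rho> \<le> ennreal (a * N) * ennreal (\<rho> powr (- \<beta> - 1))"
      using FN[OF \<rho>] \<rho> a N by (intro kernel_mult_le_powr) auto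
    ultimately show ?thesis
      using \<rho> by (cases "\<rho> \<le> \<rho>\<^sub>0") (auto intro: add_increasing add_increasing2)
  qed (simp add: F0)
  then have "(\<integral>\<^sup>+\<rho>. ennreal (a * \<rho> powr (- a - 1)) * F \<rho> \<partial>lborel)
      \<le> (\<integral>\<^sup>+\<rho>. ennreal (a * M) * (ennreal (\<rho> powr (\<alpha> - 1)) * indicator {0..\<rho>\<^sub>0} \<rho>)
        + ennreal (a * N) * (ennreal (\<rho> powr (- \<beta> - 1)) * indicator {\<rho>\<^sub>0..} \<rho>) \<partial>lborel)"
    by (intro nn_integral_mono)
  also have "\<dots> = ennreal (a * M) * ennreal (\<rho>\<^sub>0 powr \<alpha> / \<alpha>) + ennreal (a * N) * ennreal (\<rho>\<^sub>0 powr (- \<beta>) / \<beta>)"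
    using nn_integral_powr_Icc_0[OF \<alpha>, of \<rho>\<^sub>0] nn_integral_powr_Ici[OF \<beta> \<rho>\<^sub>0] \<rho>\<^sub>0
    by (simp add: nn_integral_add nn_integral_cmult)
  also have "\<dots> = ennreal (a / \<alpha> * (M * \<rho>\<^sub>0 powr \<alpha>) + a / \<beta> * (N * \<rho>\<^sub>0 powr (- \<beta>)))"
    using a M N \<alpha> \<beta> by (simp add: ennreal_mult[symmetric] ennreal_plus[symmetric] mult_ac del: ennreal_plus)
  also have "\<dots> = ennreal ((a / \<alpha> + a / \<beta>) * (M powr (\<beta> / (\<alpha> + \<beta>)) * N powr (\<alpha> / (\<alpha> + \<beta>))))"
    unfolding \<rho>\<^sub>0_def powr_balance[OF M N \<alpha> \<beta>] by (simp add: algebra_simps)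
  finally show ?thesis .
qed

lemma nn_integral_kernel_interpolation:
  fixes F :: "real \<Rightarrow> ennreal" and M N :: ennreal
  assumes a: "0 < a" and \<alpha>: "0 < \<alpha>" and \<beta>: "0 < \<beta>"
    and F0: "\<And>\<rho>. \<rho> \<le> 0 \<Longrightarrow> F \<rho> = 0"
    and FM: "\<And>\<rho>. 0 < \<rho> \<Longrightarrow> F \<rho> \<le> ennreal (\<rho> powr (a + \<alpha>)) * M"
    and FN: "\<And>\<rho>. 0 < \<rho> \<Longrightarrow> F \<rho> \<le> ennreal (\<rho> powr (a - \<beta>)) * N"
  shows "(\<integral>\<^sup>+\<rho>. ennreal (a * \<rho> powr (- a - 1)) * F \<rho> \<partial>lborel)
    \<le> ennreal (a / \<alpha> + a / \<beta>) * ennpowr M (\<beta> / (\<alpha> + \<beta>)) * ennpowr N (\<alpha> / (\<alpha> + \<beta>))"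
proof (cases "M = 0 \<or> N = 0")
  case True
  have "F \<rho> = 0" for \<rho>
    using True F0[of \<rho>] FM[of \<rho>] FN[of \<rho>] by (cases "0 < \<rho>") auto
  then show ?thesis
    by simp
next
  case nonzero: False
  have c: "0 < a / \<alpha> + a / \<beta>"
    using a \<alpha> \<beta> by (simp add: add_pos_pos)
  show ?thesis
  proof (cases "M = top \<or> N = top")
    case True
    have "ennpowr M (\<beta> / (\<alpha> + \<beta>)) * ennpowr N (\<alpha> / (\<alpha> + \<beta>)) = top"
      using True nonzero ennpowr_pos[of M] ennpowr_pos[of N] by (auto simp: zero_less_iff_neq_zero)
    then show ?thesis
      using c by (simp add: mult.assoc)
  next
    case False
    with nonzero obtain Mr Nr where M: "M = ennreal Mr" "0 < Mr" and N: "N = ennreal Nr" "0 < Nr"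
      by (cases M; cases N) auto
    have "(\<integral>\<^sup>+\<rho>. ennreal (a * \<rho> powr (- a - 1)) * F \<rho> \<partial>lborel)
        \<le> ennreal ((a / \<alpha> + a / \<beta>) * (Mr powr (\<beta> / (\<alpha> + \<beta>)) * Nr powr (\<alpha> / (\<alpha> + \<beta>))))"
      using FM FN unfolding M(1) N(1) by (intro nn_integral_kernel_interpolation_real[OF a \<alpha> \<beta> M(2) N(2) F0])
    then show ?thesis
      using M N c by (simp add: ennpowr_def ennreal_mult mult.assoc)
  qed
qed

lemma interpolation_exponents:
  fixes n \<kappa> a \<delta> p :: real
  assumes p: "0 < p" and \<kappa>: "\<kappa> < n - a" and \<delta>: "p * (n - a) < \<delta>"
  defines "\<alpha> \<equiv> n - \<kappa> - a" and "\<beta> \<equiv> \<delta> / p - n + a"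
  shows "0 < \<alpha>" "0 < \<beta>" "\<alpha> / (\<alpha> + \<beta>) / p = \<alpha> / (\<delta> - \<kappa> * p)"
    "\<beta> / (\<alpha> + \<beta>) = 1 - p * \<alpha> / (\<delta> - \<kappa> * p)"
proof -
  show \<alpha>: "0 < \<alpha>" and \<beta>: "0 < \<beta>"
    using assms by (simp_all add: field_simps)
  have \<alpha>\<beta>: "p * (\<alpha> + \<beta>) = \<delta> - \<kappa> * p"
    using p by (simp add: \<alpha>_def \<beta>_def field_simps)
  show "\<alpha> / (\<alpha> + \<beta>) / p = \<alpha> / (\<delta> - \<kappa> * p)"
    unfolding \<alpha>\<beta>[symmetric] by (simp add: mult.commute)
  have "\<beta> / (\<alpha> + \<beta>) = 1 - \<alpha> / (\<alpha> + \<beta>)"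
    using \<alpha> \<beta> by (simp add: field_simps)
  then show "\<beta> / (\<alpha> + \<beta>) = 1 - p * \<alpha> / (\<delta> - \<kappa> * p)"
    using p unfolding \<alpha>\<beta>[symmetric] by simp
qed

lemma riesz_potential_le_maximal_choquet:
  fixes a \<kappa> \<delta> p :: real
  assumes a: "0 < a" and \<kappa>: "\<kappa> < real DIM('a) - a"
    and \<delta>: "0 < \<delta>" "\<delta> \<le> real DIM('a)"
    and p: "\<delta> / real DIM('a) \<le> p" "p * (real DIM('a) - a) < \<delta>"
  shows "\<exists>c>0. \<forall>(f :: 'a::euclidean_space \<Rightarrow> real) x. f \<in> borel_measurable lebesgue \<longrightarrow>
     (\<integral>\<^sup>+ y. ennreal (\<bar>f y\<bar> / norm (x - y) powr a) \<partial>lebesgue)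
       \<le> ennreal c * ennpowr (frac_maximal \<kappa> f x) (1 - p * (real DIM('a) - \<kappa> - a) / (\<delta> - \<kappa> * p))
         * ennpowr (choquet_integral \<delta> (\<lambda>y. \<bar>f y\<bar> powr p)) ((real DIM('a) - \<kappa> - a) / (\<delta> - \<kappa> * p))"
proof -
  define \<alpha> where "\<alpha> = real DIM('a) - \<kappa> - a"
  define \<beta> where "\<beta> = \<delta> / p - real DIM('a) + a"
  define K where "K = unit_ball_vol (real DIM('a)) * (1 + 1 / p)"
  define c where "c = (a / \<alpha> + a / \<beta>) * K powr (\<alpha> / (\<alpha> + \<beta>))"
  have "0 < \<delta> / real DIM('a)"
    using \<delta>(1) by simp
  with p(1) have p0: "0 < p"
    by simp
  note exponents = interpolation_exponents[OF p0 \<kappa> p(2), folded \<alpha>_def \<beta>_def]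
  have K: "0 < K"
    using p0 unfolding K_def by (intro mult_pos_pos add_pos_pos) auto
  show ?thesis
  proof (intro exI[of _ c] conjI allI impI)
    show "0 < c"
      using a exponents(1,2) K by (simp add: c_def add_pos_pos)
  next
    fix f :: "'a \<Rightarrow> real" and x :: 'a
    assume f: "f \<in> borel_measurable lebesgue"
    define F where "F \<rho> = (\<integral>\<^sup>+y\<in>ball x \<rho>. ennreal \<bar>f y\<bar> \<partial>lebesgue)" for \<rho>
    define J where "J = choquet_integral \<delta> (\<lambda>y. \<bar>f y\<bar> powr p)"
    have "(\<integral>\<^sup>+ y. ennreal (\<bar>f y\<bar> / norm (x - y) powr a) \<partial>lebesgue)
        = (\<integral>\<^sup>+\<rho>. ennreal (a * \<rho> powr (- a - 1)) * F \<rho> \<partial>lborel)"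
      unfolding F_def using f a by (rule nn_integral_riesz_kernel_layer_cake)
    also have "\<dots> \<le> ennreal (a / \<alpha> + a / \<beta>) * ennpowr (frac_maximal \<kappa> f x) (\<beta> / (\<alpha> + \<beta>))
        * ennpowr (ennreal K * ennpowr J (1 / p)) (\<alpha> / (\<alpha> + \<beta>))"
    proof (rule nn_integral_kernel_interpolation[OF a exponents(1,2)])
      show "F \<rho> = 0" if "\<rho> \<le> 0" for \<rho>
        using that by (simp add: F_def ball_empty)
      show "F \<rho> \<le> ennreal (\<rho> powr (a + \<alpha>)) * frac_maximal \<kappa> f x" if "0 < \<rho>" for \<rho>
        using set_nn_integral_ball_le_frac_maximal[OF that] by (simp add: F_def \<alpha>_def)
      show "F \<rho> \<le> ennreal (\<rho> powr (a - \<beta>)) * (ennreal K * ennpowr J (1 / p))" if "0 < \<rho>" for \<rho>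
        using set_nn_integral_ball_le_choquet[OF f that \<delta> p(1), of x] K p0 that
        by (simp add: F_def J_def K_def \<beta>_def ennreal_mult mult_ac)
    qed
    also have "\<dots> = ennreal c * ennpowr (frac_maximal \<kappa> f x) (\<beta> / (\<alpha> + \<beta>)) * ennpowr J (\<alpha> / (\<alpha> + \<beta>) / p)"
      using K a exponents(1,2)
      by (simp add: ennpowr_mult_ennreal ennpowr_ennpowr c_def ennreal_mult add_pos_pos mult_ac)
    finally show "(\<integral>\<^sup>+ y. ennreal (\<bar>f y\<bar> / norm (x - y) powr a) \<partial>lebesgue)
       \<le> ennreal c * ennpowr (frac_maximal \<kappa> f x) (1 - p * (real DIM('a) - \<kappa> - a) / (\<delta> - \<kappa> * p))
         * ennpowr (choquet_integral \<delta> (\<lambda>y. \<bar>f y\<bar> powr p)) ((real DIM('a) - \<kappa> - a) / (\<delta> - \<kappa> * p))"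
      unfolding exponents(3,4) by (simp add: J_def \<alpha>_def)
  qed
qed

theorem lemma4p6:
  fixes \<delta> s p \<kappa> :: real
  assumes n2: "DIM('a::euclidean_space) \<ge> 2"
    and \<delta>: "0 < \<delta>" "\<delta> \<le> real DIM('a)"
    and s: "1 \<le> s" "s < real DIM('a) / (real DIM('a) - 1)"
    and p: "\<delta> / real DIM('a) \<le> p" "p < \<delta> / (real DIM('a) + s * (1 - real DIM('a)))"
    and \<kappa>: "0 \<le> \<kappa>" "\<kappa> < real DIM('a) + s * (1 - real DIM('a))"
  shows "\<exists>c>0. \<forall>(f :: 'a \<Rightarrow> real) x. locally_integrable f \<longrightarrow>
     (\<integral>\<^sup>+ y. ennreal (\<bar>f y\<bar> / norm (x - y) powr (s * (real DIM('a) - 1))) \<partial>lebesgue)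
       \<le> ennreal c *
         ennpowr (frac_maximal \<kappa> f x)
           (1 - p * (real DIM('a) - \<kappa> + s * (1 - real DIM('a))) / (\<delta> - \<kappa> * p)) *
         ennpowr (choquet_integral \<delta> (\<lambda>y. \<bar>f y\<bar> powr p))
           ((real DIM('a) - \<kappa> + s * (1 - real DIM('a))) / (\<delta> - \<kappa> * p))"
proof -
  define a where "a = s * (real DIM('a) - 1)"
  have a: "0 < a"
    using n2 s(1) by (simp add: a_def)
  have na: "real DIM('a) + s * (1 - real DIM('a)) = real DIM('a) - a"
    by (simp add: a_def algebra_simps)
  have \<kappa>': "\<kappa> < real DIM('a) - a"
    using \<kappa>(2) na by simp
  have "0 < real DIM('a) - a"
    using \<kappa>(1) \<kappa>' by simp
  with p(2) na have p': "p * (real DIM('a) - a) < \<delta>"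
    by (simp add: pos_less_divide_eq)
  have "real DIM('a) - \<kappa> + s * (1 - real DIM('a)) = real DIM('a) - \<kappa> - a"
    using na by simp
  with riesz_potential_le_maximal_choquet[OF a \<kappa>' \<delta> p(1) p'] show ?thesis
    unfolding locally_integrable_def a_def by auto
qed

end
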